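(* Let $\phi\in C^3((0,\infty))$, $\eta=\phi'$ and $\hat\eta(r)=\eta(r)+2\eta(2r)$, and suppose there are constants $0<a_0<\tilde r_1<\tilde r_2<2a_0$ and $a_1>a_0$ such that: $\eta'(r)>0$ for $0<r<\tilde r_1$ and $\eta'(r)<0$ for $r>\tilde r_1$; $\eta''(r)<0$ for $0<r<\tilde r_2$ and $\eta''(r)>0$ for $r>\tilde r_2$; $\hat\eta(r)<0$ for $0<r<a_0$ and $\hat\eta(r)>0$ for $r>a_0$; $\hat\eta'(r)>0$ for $0<r<a_1$ and $\hat\eta'(r)<0$ for $r>a_1$. Let $N,K$ be integers with $K\ge2$ and $K<N-1$. For $\mathbf r=(r_{-N},\dots,r_N)\in(0,\infty)^{2N+1}$ define: (i) $F^{QCF}_j(\mathbf r)$, $j=-N,\dots,N+1$: $F^{QCF}_{-N}=\eta(r_{-N})+2\eta(2r_{-N})$; $F^{QCF}_j=[\eta(r_j)+2\eta(2r_j)]-[\eta(r_{j-1})+2\eta(2r_{j-1})]$ for $-N+1\le j\le -K$ and $K+1\le j\le N$; $F^{QCF}_j=[\eta(r_j)+\eta(r_j+r_{j+1})]-[\eta(r_{j-1})+\eta(r_{j-1}+r_{j-2})]$ for $-K+1\le j\le K$; $F^{QCF}_{N+1}=-[\eta(r_N)+2\eta(2r_N)]$. (ii) $\psi^E_j(\mathbf r)$, $j=-N-1,\dots,N+1$: $\psi^E_{-N-1}=\psi^E_{N+1}=0$; $\psi^E_j=\eta(r_j)+2\eta(2r_j)$ for $-N\le j\le -K-2$ and $K+2\le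 j\le N$; $\psi^E_{-K-1}=\eta(r_{-K-1})+2\eta(2r_{-K-1})+\tfrac12\eta(r_{-K-1}+r_{-K})$; $\psi^E_{-K}=\eta(r_{-K})+\tfrac12\eta(r_{-K}+r_{-K-1})+\tfrac12\eta(r_{-K}+r_{-K+1})+\eta(2r_{-K})$; $\psi^E_{-K+1}=\eta(r_{-K+1})+\tfrac12\eta(r_{-K+1}+r_{-K})+\eta(r_{-K+1}+r_{-K+2})$; $\psi^E_j=\eta(r_j)+\eta(r_j+r_{j-1})+\eta(r_j+r_{j+1})$ for $-K+2\le j\le K-2$; $\psi^E_{K-1}=\eta(r_{K-1})+\eta(r_{K-1}+r_{K-2})+\tfrac12\eta(r_{K-1}+r_K)$; $\psi^E_K=\eta(r_K)+\tfrac12\eta(r_K+r_{K-1})+\tfrac12\eta(r_K+r_{K+1})+\eta(2r_K)$; $\psi^E_{K+1}=\eta(r_{K+1})+2\eta(2r_{K+1})+\tfrac12\eta(r_{K+1}+r_K)$. (iii) $F^{QCE}_j(\mathbf r)=\psi^E_j(\mathbf r)-\psi^E_{j-1}(\mathbf r)$ and $F^G_j(\mathbf r)=F^{QCF}_j(\mathbf r)-F^{QCE}_j(\mathbf r)$ for $j=-N,\dots,N+1$. Let $f_{-N},\dots,f_{N+1}\in\mathbb R$ be anti-symmetric, i.e. $f_{j+1}=-f_{-j}$ for $j=0,\dots,N$, and set $\Phi_j=-\sum_{i=-N}^{j}f_i$ for $j=-N,\dots,N$. Suppose $r_L,r_U$ satisfy $\tilde r_2/2<r_L<r_U$ and $\eta'(r_U)+13\eta'(2r_L)>0$,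 and $\eta(r_L)+4\eta(2r_L)-2\eta(2r_U)<\Phi_j<\eta(r_U)+4\eta(2r_U)-2\eta(2r_L)$ for $j=-N,\dots,N$. Then for every symmetric $\mathbf r^n\in\Omega=(r_L,r_U)^{2N+1}$ there is a unique symmetric $\mathbf r^{n+1}\in\Omega$ such that $F^{QCE}_j(\mathbf r^{n+1})+F^G_j(\mathbf r^n)+f_j=0$ for $j=-N,\dots,N+1$. The induced mapping $\mathbf r^n\mapsto\mathbf r^{n+1}$ is a contraction satisfying, for symmetric $\mathbf r^n,\mathbf s^n\in\Omega$ with images $\mathbf r^{n+1},\mathbf s^{n+1}$, $\|\mathbf r^{n+1}-\mathbf s^{n+1}\|_\infty\le\frac{8|\eta'(2r_L)|}{\eta'(r_U)-5|\eta'(2r_L)|}\|\mathbf r^n-\mathbf s^n\|_\infty$, where $\frac{8|\eta'(2r_L)|}{\eta'(r_U)-5|\eta'(2r_L)|}<1$; and the iterates $\mathbf r^n$ converge to the unique symmetric $\mathbf r\in\Omega$ satisfying the force-based quasicontinuum equations $F^{QCF}_j(\mathbf r)+f_j=0$, $j=-N,\dots,N+1$.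
   Context: A vector $\mathbf r$ is symmetric if $r_{-j}=r_j$ for $j=1,\dots,N$; $\|\mathbf r\|_\infty=\max_i|r_i|$. $F^{QCF}$, $F^{QCE}$ and $F^G$ are the force-based quasicontinuum forces, energy-based quasicontinuum forces and ghost-force corrections on the representative atoms of a one-dimensional chain with nearest and next-nearest neighbour pair interactions given by $\phi$, expressed in the lattice spacings $r_j$; $f_j$ are external forces. *)

theory Defs
  imports Complex_Main
begin

text \<open>Lattice vectors r = (r_{-N},...,r_N) are represented as functions int => real;
  only the values at indices -N..N matter.\<close>

definition eta_hat :: "(real \<Rightarrow> real) \<Rightarrow> real \<Rightarrow> real" where
  "eta_hat eta r = eta r + 2 * eta (2 * r)"

definition FQCF :: "(real \<Rightarrow> real) \<Rightarrow> int \<Rightarrow> int \<Rightarrow> (int \<Rightarrow> real) \<Rightarrow> int \<Rightarrow> real" where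
  "FQCF eta N K r j =
    (if j = -N then eta_hat eta (r (-N))
     else if (-N+1 \<le> j \<and> j \<le> -K) \<or> (K+1 \<le> j \<and> j \<le> N) then
       eta_hat eta (r j) - eta_hat eta (r (j-1))
     else if -K+1 \<le> j \<and> j \<le> K then
       (eta (r j) + eta (r j + r (j+1))) - (eta (r (j-1)) + eta (r (j-1) + r (j-2)))
     else if j = N+1 then - eta_hat eta (r N)
     else 0)"

definition psiE :: "(real \<Rightarrow> real) \<Rightarrow> int \<Rightarrow> int \<Rightarrow> (int \<Rightarrow> real) \<Rightarrow> int \<Rightarrow> real" where
  "psiE eta N K r j =
    (if j = -N-1 \<or> j = N+1 then 0
     else if (-N \<le> j \<and> j \<le> -K-2) \<or> (K+2 \<le> j \<and> j \<le> N) then eta (r j) + 2 * eta (2 * r j)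
     else if j = -K-1 then
       eta (r (-K-1)) + 2 * eta (2 * r (-K-1)) + 1/2 * eta (r (-K-1) + r (-K))
     else if j = -K then
       eta (r (-K)) + 1/2 * eta (r (-K) + r (-K-1)) + 1/2 * eta (r (-K) + r (-K+1)) + eta (2 * r (-K))
     else if j = -K+1 then
       eta (r (-K+1)) + 1/2 * eta (r (-K+1) + r (-K)) + eta (r (-K+1) + r (-K+2))
     else if -K+2 \<le> j \<and> j \<le> K-2 then
       eta (r j) + eta (r j + r (j-1)) + eta (r j + r (j+1))
     else if j = K-1 then
       eta (r (K-1)) + eta (r (K-1) + r (K-2)) + 1/2 * eta (r (K-1) + r K)
     else if j = K then
       eta (r K) + 1/2 * eta (r K + r (K-1)) + 1/2 * eta (r K + r (K+1)) + eta (2 * r K)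
     else if j = K+1 then
       eta (r (K+1)) + 2 * eta (2 * r (K+1)) + 1/2 * eta (r (K+1) + r K)
     else 0)"

definition FQCE :: "(real \<Rightarrow> real) \<Rightarrow> int \<Rightarrow> int \<Rightarrow> (int \<Rightarrow> real) \<Rightarrow> int \<Rightarrow> real" where
  "FQCE eta N K r j = psiE eta N K r j - psiE eta N K r (j-1)"

definition FG :: "(real \<Rightarrow> real) \<Rightarrow> int \<Rightarrow> int \<Rightarrow> (int \<Rightarrow> real) \<Rightarrow> int \<Rightarrow> real" where
  "FG eta N K r j = FQCF eta N K r j - FQCE eta N K r j"

definition symmetric_vec :: "int \<Rightarrow> (int \<Rightarrow> real) \<Rightarrow> bool" where
  "symmetric_vec N r \<longleftrightarrow> (\<forall>j\<in>{1..N}. r (-j) = r j)"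

definition in_Omega :: "real \<Rightarrow> real \<Rightarrow> int \<Rightarrow> (int \<Rightarrow> real) \<Rightarrow> bool" where
  "in_Omega rL rU N r \<longleftrightarrow> (\<forall>j\<in>{-N..N}. rL < r j \<and> r j < rU)"

definition sup_dist :: "int \<Rightarrow> (int \<Rightarrow> real) \<Rightarrow> (int \<Rightarrow> real) \<Rightarrow> real" where
  "sup_dist N r s = Max ((\<lambda>j. \<bar>r j - s j\<bar>) ` {-N..N})"

definition gfc_step :: "(real \<Rightarrow> real) \<Rightarrow> int \<Rightarrow> int \<Rightarrow> (int \<Rightarrow> real) \<Rightarrow> (int \<Rightarrow> real) \<Rightarrow> (int \<Rightarrow> real) \<Rightarrow> bool" where
  "gfc_step eta N K f r r' \<longleftrightarrow>
     (\<forall>j\<in>{-N..N+1}. FQCE eta N K r' j + FG eta N K r j + f j = 0)"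

definition qcf_eq :: "(real \<Rightarrow> real) \<Rightarrow> int \<Rightarrow> int \<Rightarrow> (int \<Rightarrow> real) \<Rightarrow> (int \<Rightarrow> real) \<Rightarrow> bool" where
  "qcf_eq eta N K f r \<longleftrightarrow> (\<forall>j\<in>{-N..N+1}. FQCF eta N K r j + f j = 0)"

end

theory Submission
  imports Defs
begin

text \<open>Summing the equations from the left turns FQCE into the potential psiE and FQCF into a
  stress qcf_stress, so a ghost-force correction step r \<mapsto> r' amounts to solving
  psiE r' = \<Phi> - G r, where for symmetric r the ghost stress G r = qcf_stress r - psiE r only
  involves the bonds at the interface. On [rL, rU] the force \<eta> increases with slope at least
  \<eta>'(rU), on [2 rL, 2 rU] it decreases with slope at least -|\<eta>'(2 rL)|. Hence psiE is strictly
  diagonally dominant on the closed box: if two bond vectors differ by \<delta> in sup-norm, some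
  component of psiE differs by at least (\<eta>'(rU) - 5 |\<eta>'(2 rL)|) \<delta>. This gives uniqueness of r',
  and existence follows from a Jacobi iteration whose rows are solved by the intermediate value
  theorem; the bounds on \<Phi> keep the solution inside \<Omega>, and reflection invariance together with
  uniqueness makes it symmetric. Since G is 8 |\<eta>'(2 rL)|-Lipschitz, the step is a contraction,
  and the limit of any orbit is a fixed point, i.e. a solution of the QCF equations.\<close>

section \<open>Contractions in the sup-distance\<close>

lemma sup_dist_ge: "j \<in> {-N..N} \<Longrightarrow> \<bar>x j - y j\<bar> \<le> sup_dist N x y"
  unfolding sup_dist_def by (rule Max_ge) auto

lemma sup_dist_le: "0 \<le> N \<Longrightarrow> (\<And>j. j \<in> {-N..N} \<Longrightarrow> \<bar>x j - y j\<bar> \<le> B) \<Longrightarrow> sup_dist N x y \<le> B"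
  unfolding sup_dist_def by (subst Max_le_iff) auto

lemma sup_dist_attained: "0 \<le> N \<Longrightarrow> \<exists>k\<in>{-N..N}. \<bar>x k - y k\<bar> = sup_dist N x y"
  unfolding sup_dist_def using Max_in[of "(\<lambda>j. \<bar>x j - y j\<bar>) ` {-N..N}"] by fastforce

lemma sup_dist_nonneg: "0 \<le> N \<Longrightarrow> 0 \<le> sup_dist N x y"
  using sup_dist_ge[of 0 N x y] by force

lemma sup_dist_commute: "sup_dist N x y = sup_dist N y x"
  unfolding sup_dist_def by (simp add: abs_minus_commute)

lemma sup_dist_self: "0 \<le> N \<Longrightarrow> sup_dist N x x = 0"
  using sup_dist_le[of N x x 0] sup_dist_nonneg[of N x x] by simp

lemma eq_if_sup_dist_le_0: "sup_dist N x y \<le> 0 \<Longrightarrow> j \<in> {-N..N} \<Longrightarrow> x j = y j"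
  using sup_dist_ge[of j N x y] by simp

lemma sup_dist_tendsto_0:
  assumes "0 \<le> N" and "\<And>j. j \<in> {-N..N} \<Longrightarrow> (\<lambda>n. X n j) \<longlonglongrightarrow> x j"
  shows "(\<lambda>n. sup_dist N (X n) x) \<longlonglongrightarrow> 0"
proof (rule tendsto_sandwich[OF _ _ tendsto_const])
  show "\<forall>\<^sub>F n in sequentially. 0 \<le> sup_dist N (X n) x"
    using sup_dist_nonneg[OF assms(1)] by simp
  show "\<forall>\<^sub>F n in sequentially. sup_dist N (X n) x \<le> (\<Sum>j\<in>{-N..N}. \<bar>X n j - x j\<bar>)"
    using assms(1) by (intro always_eventually allI sup_dist_le member_le_sum) auto
  show "(\<lambda>n. \<Sum>j\<in>{-N..N}. \<bar>X n j - x j\<bar>) \<longlonglongrightarrow> 0"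
    using tendsto_sum[of "{-N..N}" "\<lambda>j n. \<bar>X n j - x j\<bar>" "\<lambda>_. 0"] assms(2)
    by (simp add: tendsto_rabs_zero_iff LIM_zero_iff)
qed

lemma convergent_if_sup_dist_geometric:
  assumes "0 \<le> q" "q < 1" and geometric: "\<And>n. sup_dist N (X (Suc n)) (X n) \<le> q ^ n * D"
    and j: "j \<in> {-N..N}"
  shows "convergent (\<lambda>n. X n j)"
proof -
  have "summable (\<lambda>n. X (Suc n) j - X n j)"
  proof (rule summable_comparison_test)
    show "\<exists>n0. \<forall>n\<ge>n0. norm (X (Suc n) j - X n j) \<le> q ^ n * D"
      using order_trans[OF sup_dist_ge[OF j] geometric] by auto
    show "summable (\<lambda>n. q ^ n * D)"
      using assms(1,2) by (intro summable_mult2 summable_geometric) simp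
  qed
  then have "convergent (\<lambda>n. (X n j - X 0 j) + X 0 j)"
    by (intro convergent_add convergent_const)
      (simp add: summable_iff_convergent sum_lessThan_telescope[of "\<lambda>i. X i j"])
  then show ?thesis by simp
qed

text \<open>The map is given as a relation because a successor is only determined on {-N..N}.\<close>

locale sup_contraction =
  fixes N :: int and adm :: "(int \<Rightarrow> real) \<Rightarrow> bool"
    and step :: "(int \<Rightarrow> real) \<Rightarrow> (int \<Rightarrow> real) \<Rightarrow> bool" and q :: real
  assumes N_nonneg: "0 \<le> N" and q_nonneg: "0 \<le> q" and q_less_1: "q < 1"
    and step_exists: "adm x \<Longrightarrow> \<exists>y. adm y \<and> step x y"
    and step_contracts: "\<lbrakk>adm x; adm x'; adm y; adm y'; step x y; step x' y'\<rbrakk>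
      \<Longrightarrow> sup_dist N y y' \<le> q * sup_dist N x x'"
    and step_cong: "\<lbrakk>step x y; \<forall>j\<in>{-N..N}. z j = y j\<rbrakk> \<Longrightarrow> step x z"
    and adm_limit: "\<lbrakk>\<forall>n. adm (X n); \<forall>j\<in>{-N..N}. (\<lambda>n. X n j) \<longlonglongrightarrow> x j\<rbrakk> \<Longrightarrow> adm x"
begin

lemma step_unique:
  assumes "adm x" "adm y" "adm y'" "step x y" "step x y'" "j \<in> {-N..N}"
  shows "y j = y' j"
  using step_contracts[OF assms(1,1-5)] sup_dist_self[OF N_nonneg] eq_if_sup_dist_le_0 assms(6)
  by simp

lemma fixed_point_unique:
  assumes "adm x" "adm y" "step x x" "step y y" "j \<in> {-N..N}"
  shows "x j = y j"
proof -
  have "sup_dist N x y \<le> q * sup_dist N x y"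
    using step_contracts[OF assms(1,2,1,2,3,4)] .
  then have "sup_dist N x y \<le> 0"
    using q_less_1 sup_dist_nonneg[OF N_nonneg, of x y] by (simp add: mult_le_cancel_right1)
  then show ?thesis using assms(5) by (rule eq_if_sup_dist_le_0)
qed

lemma orbit_sup_dist_geometric:
  assumes adm: "\<And>n. adm (X n)" and step: "\<And>n. step (X n) (X (Suc n))"
  shows "sup_dist N (X (Suc n)) (X n) \<le> q ^ n * sup_dist N (X 1) (X 0)"
proof (induction n)
  case (Suc n)
  have "sup_dist N (X (Suc (Suc n))) (X (Suc n)) \<le> q * sup_dist N (X (Suc n)) (X n)"
    using step_contracts[OF adm adm adm adm step step] .
  also have "\<dots> \<le> q * (q ^ n * sup_dist N (X 1) (X 0))"
    using Suc.IH q_nonneg by (rule mult_left_mono)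
  finally show ?case by simp
qed simp

lemma orbit_converges:
  assumes adm: "\<And>n. adm (X n)" and step: "\<And>n. step (X n) (X (Suc n))"
  shows "\<exists>x. adm x \<and> step x x \<and> (\<forall>j\<in>{-N..N}. (\<lambda>n. X n j) \<longlonglongrightarrow> x j)"
proof -
  have convergent: "convergent (\<lambda>n. X n j)" if "j \<in> {-N..N}" for j
    using q_nonneg q_less_1 orbit_sup_dist_geometric[of X, OF adm step] that
    by (rule convergent_if_sup_dist_geometric)
  define x where "x j = lim (\<lambda>n. X n j)" for j
  have lim: "\<forall>j\<in>{-N..N}. (\<lambda>n. X n j) \<longlonglongrightarrow> x j"
    unfolding x_def using convergent by (simp add: convergent_LIMSEQ_iff)
  have "adm x"
    by (rule adm_limit) (use adm lim in auto)
  then obtain y where y: "adm y" "step x y"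
    using step_exists by blast
  have "y j = x j" if j: "j \<in> {-N..N}" for j
  proof (rule LIMSEQ_unique)
    show "(\<lambda>n. X (Suc n) j) \<longlonglongrightarrow> x j"
      using lim j by (intro LIMSEQ_Suc) simp
    have bound: "\<bar>X (Suc n) j - y j\<bar> \<le> q * sup_dist N (X n) x" for n
      using sup_dist_ge[OF j] step_contracts[OF adm \<open>adm x\<close> adm y(1) step y(2)]
      by (rule order_trans)
    have bound_to_0: "(\<lambda>n. q * sup_dist N (X n) x) \<longlonglongrightarrow> 0"
      using lim by (intro tendsto_mult_right_zero sup_dist_tendsto_0 N_nonneg) simp
    have "(\<lambda>n. \<bar>X (Suc n) j - y j\<bar>) \<longlonglongrightarrow> 0"
      by (rule tendsto_sandwich[OF _ _ tendsto_const bound_to_0]) (auto intro: always_eventually bound)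
    then show "(\<lambda>n. X (Suc n) j) \<longlonglongrightarrow> y j"
      by (simp add: tendsto_rabs_zero_iff LIM_zero_iff)
  qed
  then have "step x x"
    using step_cong[OF y(2)] by simp
  with \<open>adm x\<close> lim show ?thesis by blast
qed

lemma fixed_point_exists:
  assumes "adm x\<^sub>0"
  shows "\<exists>x. adm x \<and> step x x"
proof -
  have "\<exists>X. \<forall>n. adm (X n) \<and> step (X n) (X (Suc n))"
    by (rule dependent_nat_choice) (use assms step_exists in auto)
  then obtain X where "\<forall>n. adm (X n) \<and> step (X n) (X (Suc n))"
    by blast
  then show ?thesis
    using orbit_converges[of X] by blast
qed

end

lemma sum_int_telescope:
  fixes h :: "int \<Rightarrow> 'a::ab_group_add"
  assumes "a - 1 \<le> b"
  shows "(\<Sum>i=a..b. h i - h (i - 1)) = h b - h (a - 1)"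
  using assms
proof (induction b rule: int_ge_induct)
  case (step i)
  have "{a..i + 1} = insert (i + 1) {a..i}"
    using step.hyps by auto
  then show ?case
    using step.IH by simp
qed simp

lemma all_zero_iff_partial_sums_zero:
  fixes g :: "int \<Rightarrow> 'a::ab_group_add"
  shows "(\<forall>j\<in>{a..b}. g j = 0) \<longleftrightarrow> (\<forall>j\<in>{a..b}. (\<Sum>i=a..j. g i) = 0)"
proof
  assume partial: "\<forall>j\<in>{a..b}. (\<Sum>i=a..j. g i) = 0"
  show "\<forall>j\<in>{a..b}. g j = 0"
  proof
    fix j assume j: "j \<in> {a..b}"
    have "{a..j} = insert j {a..j - 1}"
      using j by auto
    then have "(\<Sum>i=a..j. g i) = g j + (\<Sum>i=a..j - 1. g i)"
      by simp
    moreover have "(\<Sum>i=a..j - 1. g i) = 0"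
      using partial j by (cases "j = a") auto
    ultimately show "g j = 0"
      using partial j by simp
  qed
qed simp

lemma sum_int_antisymmetric:
  fixes g :: "int \<Rightarrow> real"
  assumes "\<And>i. i \<in> {1 - j..j} \<Longrightarrow> g (1 - i) = - g i"
  shows "(\<Sum>i=1 - j..j. g i) = 0"
proof -
  have "(\<Sum>i=1 - j..j. g i) = (\<Sum>i=1 - j..j. g (1 - i))"
    by (rule sum.reindex_bij_witness[where i = "\<lambda>i. 1 - i" and j = "\<lambda>i. 1 - i"]) auto
  also have "\<dots> = - (\<Sum>i=1 - j..j. g i)"
    using assms by (simp add: sum_negf)
  finally show ?thesis by simp
qed

context
  fixes f :: "int \<Rightarrow> real" and N :: int
  assumes f_anti: "\<And>j. 0 \<le> j \<Longrightarrow> j \<le> N \<Longrightarrow> f (j + 1) = - f (-j)"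
begin

lemma force_reflect: "-N \<le> i \<Longrightarrow> i \<le> N + 1 \<Longrightarrow> f (1 - i) = - f i"
  using f_anti[of "-i"] f_anti[of "i - 1"] by (cases "i \<le> 0") auto

lemma forces_balanced: "(\<Sum>i=-N..N + 1. f i) = 0"
  using sum_int_antisymmetric[of "N + 1" f] force_reflect by simp

lemma partial_force_sum_reflect:
  assumes "-N \<le> j" "j \<le> N"
  shows "(\<Sum>i=-N..-j. f i) = (\<Sum>i=-N..j. f i)"
proof -
  have split: "(\<Sum>i=-N..k. f i) = (\<Sum>i=-N..-k. f i)" if "0 \<le> k" "k \<le> N" for k
  proof -
    have "{-N..k} = {-N..-k} \<union> {1 - k..k}" "{-N..-k} \<inter> {1 - k..k} = {}"
      using that by auto
    then have "(\<Sum>i=-N..k. f i) = (\<Sum>i=-N..-k. f i) + (\<Sum>i=1 - k..k. f i)"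
      by (simp add: sum.union_disjoint)
    also have "(\<Sum>i=1 - k..k. f i) = 0"
      using that by (intro sum_int_antisymmetric force_reflect) auto
    finally show ?thesis by simp
  qed
  show ?thesis
    using split[of j] split[of "-j"] assms by (cases "0 \<le> j") auto
qed

end

lemma increment_ge_if_deriv_ge:
  fixes f f' :: "real \<Rightarrow> real"
  assumes "a \<le> b"
    and "\<And>x. a \<le> x \<Longrightarrow> x \<le> b \<Longrightarrow> (f has_real_derivative f' x) (at x)"
    and "\<And>x. a \<le> x \<Longrightarrow> x \<le> b \<Longrightarrow> c \<le> f' x"
  shows "c * (b - a) \<le> f b - f a"
proof -
  have "f a - c * a \<le> f b - c * b"
  proof (rule DERIV_nonneg_imp_nondecreasing[OF assms(1)])
    fix x assume "a \<le> x" "x \<le> b"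
    then show "\<exists>y. ((\<lambda>x. f x - c * x) has_real_derivative y) (at x) \<and> 0 \<le> y"
      using assms(2,3) by (intro exI[of _ "f' x - c"]) (auto intro!: derivative_eq_intros)
  qed
  then show ?thesis by (simp add: algebra_simps)
qed

lemma increment_le_if_deriv_le:
  fixes f f' :: "real \<Rightarrow> real"
  assumes "a \<le> b"
    and "\<And>x. a \<le> x \<Longrightarrow> x \<le> b \<Longrightarrow> (f has_real_derivative f' x) (at x)"
    and "\<And>x. a \<le> x \<Longrightarrow> x \<le> b \<Longrightarrow> f' x \<le> c"
  shows "f b - f a \<le> c * (b - a)"
proof -
  have "- c * (b - a) \<le> (- f b) - (- f a)"
    by (rule increment_ge_if_deriv_ge[where f' = "\<lambda>x. - f' x"]) (use assms in \<open>auto intro: DERIV_minus\<close>)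
  then show ?thesis by simp
qed

section \<open>The energy-based potential and the ghost stress\<close>

text \<open>In the theorem m = \<eta>'(rU) and a = |\<eta>'(2 rL)|, see qc_chainI_from_derivatives.\<close>

locale qc_chain =
  fixes eta :: "real \<Rightarrow> real" and rL rU m a :: real and N K :: int
  assumes K_ge_2: "2 \<le> K" and K_less: "K < N - 1"
    and rL_pos: "0 < rL" and rL_less_rU: "rL < rU"
    and a_pos: "0 < a" and a_small: "13 * a < m"
    and eta_increment_near:
      "\<And>y y'. \<lbrakk>rL \<le> y; y \<le> y'; y' \<le> rU\<rbrakk> \<Longrightarrow> m * (y' - y) \<le> eta y' - eta y"
    and eta_increment_far:
      "\<And>s t. \<lbrakk>2 * rL \<le> s; s \<le> t; t \<le> 2 * rU\<rbrakk> \<Longrightarrow> - (a * (t - s)) \<le> eta t - eta s \<and> eta t - eta s \<le> 0"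
    and eta_cont: "\<And>x. 0 < x \<Longrightarrow> isCont eta x"
begin

lemma N_nonneg: "0 \<le> N"
  using K_ge_2 K_less by simp

lemma eta_far_antimono: "\<lbrakk>2 * rL \<le> s; s \<le> t; t \<le> 2 * rU\<rbrakk> \<Longrightarrow> eta t \<le> eta s"
  using eta_increment_far by fastforce

lemma eta_far_lipschitz:
  assumes "2 * rL \<le> s" "s \<le> 2 * rU" "2 * rL \<le> t" "t \<le> 2 * rU"
  shows "\<bar>eta t - eta s\<bar> \<le> a * \<bar>t - s\<bar>"
  using eta_increment_far[of s t] eta_increment_far[of t s] assms by (cases "s \<le> t") auto

definition in_closed_Omega :: "(int \<Rightarrow> real) \<Rightarrow> bool" where
  "in_closed_Omega x \<longleftrightarrow> (\<forall>j\<in>{-N..N}. rL \<le> x j \<and> x j \<le> rU)"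

lemma in_closed_OmegaD: "in_closed_Omega x \<Longrightarrow> -N \<le> j \<Longrightarrow> j \<le> N \<Longrightarrow> rL \<le> x j \<and> x j \<le> rU"
  unfolding in_closed_Omega_def by auto

lemma in_closed_Omega_if_in_Omega: "in_Omega rL rU N x \<Longrightarrow> in_closed_Omega x"
  unfolding in_Omega_def in_closed_Omega_def by (auto simp: less_imp_le)

lemma in_closed_Omega_limit:
  assumes "\<forall>n. in_closed_Omega (X n)" and "\<forall>j\<in>{-N..N}. (\<lambda>n. X n j) \<longlonglongrightarrow> x j"
  shows "in_closed_Omega x"
  unfolding in_closed_Omega_def
proof
  fix j assume j: "j \<in> {-N..N}"
  with assms show "rL \<le> x j \<and> x j \<le> rU"
    using LIMSEQ_le_const[of "\<lambda>n. X n j" "x j" rL] LIMSEQ_le_const2[of "\<lambda>n. X n j" "x j" rU]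
    by (auto simp: in_closed_Omega_def)
qed

definition coeff2 :: "int \<Rightarrow> real" where
  "coeff2 j = (if \<bar>j\<bar> \<ge> K + 1 then 2 else if \<bar>j\<bar> = K then 1 else 0)"

definition coeffL :: "int \<Rightarrow> real" where
  "coeffL j = (if j \<le> -K - 1 \<or> j \<ge> K + 2 then 0
     else if j = -K \<or> j = -K + 1 \<or> j = K \<or> j = K + 1 then 1/2 else 1)"

definition coeffR :: "int \<Rightarrow> real" where
  "coeffR j = coeffL (-j)"

text \<open>At j = -N and j = N the missing neighbour has weight 0, so clamping its index to
  {-N..N} is harmless.\<close>

definition left_nb :: "int \<Rightarrow> int" where
  "left_nb j = max (j - 1) (-N)"

definition right_nb :: "int \<Rightarrow> int" where
  "right_nb j = min (j + 1) N"

definition psi_local :: "int \<Rightarrow> real \<Rightarrow> real \<Rightarrow> real \<Rightarrow> real" where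
  "psi_local j p q y = eta y + coeff2 j * eta (2 * y) + coeffL j * eta (y + p) + coeffR j * eta (y + q)"

lemma coeff_bounds:
  assumes "-N \<le> j" "j \<le> N"
  shows "0 \<le> coeff2 j" "0 \<le> coeffL j" "0 \<le> coeffR j" "2 * (coeff2 j + coeffL j + coeffR j) \<le> 5"
  using K_ge_2 K_less assms by (auto simp: coeff2_def coeffL_def coeffR_def)

lemma nb_in_range: "-N \<le> j \<Longrightarrow> j \<le> N \<Longrightarrow> left_nb j \<in> {-N..N} \<and> right_nb j \<in> {-N..N}"
  unfolding left_nb_def right_nb_def by auto

lemma psiE_eq_psi_local:
  assumes "-N \<le> j" "j \<le> N"
  shows "psiE eta N K x j = psi_local j (x (left_nb j)) (x (right_nb j)) (x j)"
proof -
  consider "j \<le> -K - 2" | "j = -K - 1" | "j = -K" | "j = 1 - K" | "2 - K \<le> j \<and> j \<le> K - 2"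
    | "j = K - 1" | "j = K" | "j = K + 1" | "K + 2 \<le> j"
    by linarith
  then show ?thesis
    using assms K_ge_2 K_less
    by (cases; (hypsubst)?; simp add: psiE_def psi_local_def coeff2_def coeffL_def coeffR_def
        left_nb_def right_nb_def abs_if algebra_simps)
qed

lemma psiE_cong:
  assumes "\<And>i. i \<in> {-N..N} \<Longrightarrow> x i = y i"
  shows "psiE eta N K x j = psiE eta N K y j"
proof (cases "j \<in> {-N..N}")
  case True
  then show ?thesis
    using psiE_eq_psi_local[of j x] psiE_eq_psi_local[of j y] nb_in_range[of j] assms by auto
next
  case False
  then show ?thesis
    using K_ge_2 K_less by (auto simp: psiE_def)
qed

lemma psi_local_increment:
  assumes j: "-N \<le> j" "j \<le> N" and p: "rL \<le> p" "p \<le> rU" and q: "rL \<le> q" "q \<le> rU"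
    and y: "rL \<le> y" "y \<le> y'" "y' \<le> rU"
  shows "(m - (2 * coeff2 j + coeffL j + coeffR j) * a) * (y' - y) \<le> psi_local j p q y' - psi_local j p q y"
proof -
  define d where "d = y' - y"
  note c = coeff_bounds[OF j]
  have "m * d \<le> eta y' - eta y"
    using eta_increment_near[OF y] by (simp add: d_def)
  moreover have "coeff2 j * (- (a * (2 * d))) \<le> coeff2 j * (eta (2 * y') - eta (2 * y))"
    using eta_increment_far[of "2 * y" "2 * y'"] y rL_less_rU c(1)
    by (intro mult_left_mono) (auto simp: d_def algebra_simps)
  moreover have "coeffL j * (- (a * d)) \<le> coeffL j * (eta (y' + p) - eta (y + p))"
    using eta_increment_far[of "y + p" "y' + p"] y p c(2)
    by (intro mult_left_mono) (auto simp: d_def algebra_simps)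
  moreover have "coeffR j * (- (a * d)) \<le> coeffR j * (eta (y' + q) - eta (y + q))"
    using eta_increment_far[of "y + q" "y' + q"] y q c(3)
    by (intro mult_left_mono) (auto simp: d_def algebra_simps)
  ultimately show ?thesis
    by (simp add: psi_local_def d_def[symmetric] algebra_simps)
qed

lemma psi_local_lipschitz_nb:
  assumes j: "-N \<le> j" "j \<le> N" and y: "rL \<le> y" "y \<le> rU"
    and nb: "rL \<le> p" "p \<le> rU" "rL \<le> q" "q \<le> rU" "rL \<le> p'" "p' \<le> rU" "rL \<le> q'" "q' \<le> rU"
    and S: "\<bar>p - p'\<bar> \<le> S" "\<bar>q - q'\<bar> \<le> S"
  shows "\<bar>psi_local j p q y - psi_local j p' q' y\<bar> \<le> (coeffL j + coeffR j) * a * S"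
proof -
  note c = coeff_bounds[OF j]
  have "\<bar>eta (y + p) - eta (y + p')\<bar> \<le> a * S"
    using eta_far_lipschitz[of "y + p'" "y + p"] y nb S a_pos
    by (auto intro: order_trans[OF _ mult_left_mono[OF S(1)]])
  then have L: "coeffL j * \<bar>eta (y + p) - eta (y + p')\<bar> \<le> coeffL j * (a * S)"
    using c(2) by (rule mult_left_mono)
  have "\<bar>eta (y + q) - eta (y + q')\<bar> \<le> a * S"
    using eta_far_lipschitz[of "y + q'" "y + q"] y nb S a_pos
    by (auto intro: order_trans[OF _ mult_left_mono[OF S(2)]])
  then have R: "coeffR j * \<bar>eta (y + q) - eta (y + q')\<bar> \<le> coeffR j * (a * S)"
    using c(3) by (rule mult_left_mono)
  have "\<bar>psi_local j p q y - psi_local j p' q' y\<bar>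
      = \<bar>coeffL j * (eta (y + p) - eta (y + p')) + coeffR j * (eta (y + q) - eta (y + q'))\<bar>"
    by (simp add: psi_local_def algebra_simps)
  also have "\<dots> \<le> coeffL j * \<bar>eta (y + p) - eta (y + p')\<bar> + coeffR j * \<bar>eta (y + q) - eta (y + q')\<bar>"
    using c(2,3) by (auto intro: order_trans[OF abs_triangle_ineq] simp: abs_mult)
  finally show ?thesis
    using L R by (simp add: algebra_simps)
qed

lemma psiE_dominance:
  assumes "in_closed_Omega x" "in_closed_Omega x'"
  shows "\<exists>k\<in>{-N..N}. (m - 5 * a) * sup_dist N x x' \<le> \<bar>psiE eta N K x k - psiE eta N K x' k\<bar>"
proof -
  have dominant_row: "(m - 5 * a) * sup_dist N x x' \<le> psiE eta N K x k - psiE eta N K x' k"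
    if x: "in_closed_Omega x" "in_closed_Omega x'" and k: "-N \<le> k" "k \<le> N"
      and S: "x k - x' k = sup_dist N x x'" for x x' k
  proof -
    let ?S = "sup_dist N x x'" and ?c = "coeff2 k + coeffL k + coeffR k"
    let ?p = "x (left_nb k)" and ?q = "x (right_nb k)" and ?p' = "x' (left_nb k)" and ?q' = "x' (right_nb k)"
    have nb: "rL \<le> ?p" "?p \<le> rU" "rL \<le> ?q" "?q \<le> rU" "rL \<le> ?p'" "?p' \<le> rU" "rL \<le> ?q'" "?q' \<le> rU"
      using in_closed_OmegaD[OF x(1)] in_closed_OmegaD[OF x(2)] nb_in_range[OF k] by auto
    have xk: "rL \<le> x' k" "x' k \<le> x k" "x k \<le> rU" "x' k \<le> rU"
      using in_closed_OmegaD[OF x(1) k] in_closed_OmegaD[OF x(2) k] S sup_dist_nonneg[OF N_nonneg, of x x'] by auto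
    have "(m - (2 * coeff2 k + coeffL k + coeffR k) * a) * ?S \<le> psi_local k ?p ?q (x k) - psi_local k ?p ?q (x' k)"
      using psi_local_increment[OF k nb(1-4) xk(1-3)] S by simp
    moreover have "\<bar>psi_local k ?p ?q (x' k) - psi_local k ?p' ?q' (x' k)\<bar> \<le> (coeffL k + coeffR k) * a * ?S"
      using psi_local_lipschitz_nb[OF k xk(1,4) nb] sup_dist_ge nb_in_range[OF k] by auto
    moreover have "0 \<le> (5 - 2 * ?c) * a * ?S"
      using coeff_bounds[OF k] a_pos sup_dist_nonneg[OF N_nonneg, of x x'] by simp
    ultimately show ?thesis
      using psiE_eq_psi_local[OF k, of x] psiE_eq_psi_local[OF k, of x'] by (simp add: algebra_simps)
  qed
  obtain k where k: "k \<in> {-N..N}" "\<bar>x k - x' k\<bar> = sup_dist N x x'"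
    using sup_dist_attained[OF N_nonneg] by blast
  show ?thesis
  proof (cases "x' k \<le> x k")
    case True
    then show ?thesis
      using dominant_row[OF assms, of k] k by force
  next
    case False
    then show ?thesis
      using dominant_row[OF assms(2,1), of k] k by (force simp: sup_dist_commute)
  qed
qed

lemma sup_dist_le_if_psiE_close:
  assumes "in_closed_Omega x" "in_closed_Omega x'"
    and "\<And>j. j \<in> {-N..N} \<Longrightarrow> \<bar>psiE eta N K x j - psiE eta N K x' j\<bar> \<le> B"
  shows "(m - 5 * a) * sup_dist N x x' \<le> B"
  using psiE_dominance[OF assms(1,2)] assms(3) by force

lemma psiE_inj_on_closed_Omega:
  assumes "in_closed_Omega x" "in_closed_Omega x'" "\<And>j. j \<in> {-N..N} \<Longrightarrow> psiE eta N K x j = psiE eta N K x' j"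
    and "j \<in> {-N..N}"
  shows "x j = x' j"
proof -
  have "(m - 5 * a) * sup_dist N x x' \<le> 0"
    using assms by (intro sup_dist_le_if_psiE_close) auto
  then have "sup_dist N x x' \<le> 0"
    using a_pos a_small by (simp add: mult_le_0_iff)
  then show ?thesis
    using assms(4) by (rule eq_if_sup_dist_le_0)
qed

lemma psi_local_root_lipschitz:
  assumes j: "-N \<le> j" "j \<le> N"
    and nb: "rL \<le> p" "p \<le> rU" "rL \<le> q" "q \<le> rU" "rL \<le> p'" "p' \<le> rU" "rL \<le> q'" "q' \<le> rU"
    and y: "rL \<le> y" "y \<le> rU" "rL \<le> y'" "y' \<le> rU"
    and eq: "psi_local j p q y = psi_local j p' q' y'"
    and S: "\<bar>p - p'\<bar> \<le> S" "\<bar>q - q'\<bar> \<le> S"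
  shows "(m - 5 * a) * \<bar>y - y'\<bar> \<le> 5 / 2 * a * S"
proof -
  let ?c = "coeffL j + coeffR j"
  have c: "0 \<le> coeff2 j" "0 \<le> ?c" "2 * (coeff2 j + ?c) \<le> 5"
    using coeff_bounds[OF j] by auto
  have one_side: "(m - 5 * a) * (z - z') \<le> ?c * a * S"
    if "rL \<le> u" "u \<le> rU" "rL \<le> v" "v \<le> rU" "rL \<le> u'" "u' \<le> rU" "rL \<le> v'" "v' \<le> rU"
      "rL \<le> z'" "z' \<le> z" "z \<le> rU" "psi_local j u v z = psi_local j u' v' z'"
      "\<bar>u - u'\<bar> \<le> S" "\<bar>v - v'\<bar> \<le> S"
    for u v z u' v' z'
  proof -
    have "(m - (2 * coeff2 j + ?c) * a) * (z - z') \<le> psi_local j u v z - psi_local j u v z'"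
      using psi_local_increment[OF j that(1-4,9-11)] by (simp add: add.assoc)
    moreover have "\<bar>psi_local j u v z' - psi_local j u' v' z'\<bar> \<le> ?c * a * S"
      using psi_local_lipschitz_nb[OF j _ _ that(1-8)] that(9-11,13,14) by auto
    moreover have "0 \<le> (5 - 2 * (coeff2 j + ?c)) * a * (z - z') + ?c * a * (z - z')"
      using c a_pos that(10) by simp
    ultimately show ?thesis
      using that(12) by (simp add: algebra_simps)
  qed
  have "(m - 5 * a) * \<bar>y - y'\<bar> \<le> ?c * a * S"
  proof (cases "y' \<le> y")
    case True
    then show ?thesis
      using one_side[OF nb y(3) True y(2) eq S] by simp
  next
    case False
    then show ?thesis
      using one_side[OF nb(5-8) nb(1-4) y(1), of y'] y eq S
      by (simp add: abs_minus_commute)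
  qed
  also have "\<dots> \<le> 5 / 2 * a * S"
    using c a_pos S by (intro mult_right_mono) auto
  finally show ?thesis .
qed

definition jacobi_step :: "(int \<Rightarrow> real) \<Rightarrow> (int \<Rightarrow> real) \<Rightarrow> (int \<Rightarrow> real) \<Rightarrow> bool" where
  "jacobi_step c x y \<longleftrightarrow> (\<forall>j\<in>{-N..N}. psi_local j (x (left_nb j)) (x (right_nb j)) (y j) = c j)"

context
  fixes c :: "int \<Rightarrow> real"
  assumes c_between: "\<And>j p q. \<lbrakk>-N \<le> j; j \<le> N; rL \<le> p; p \<le> rU; rL \<le> q; q \<le> rU\<rbrakk>
      \<Longrightarrow> psi_local j p q rL < c j \<and> c j < psi_local j p q rU"
begin

lemma jacobi_step_exists:
  assumes x: "in_closed_Omega x"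
  shows "\<exists>y. in_closed_Omega y \<and> jacobi_step c x y"
proof -
  have "\<forall>j\<in>{-N..N}. \<exists>y. rL \<le> y \<and> y \<le> rU \<and> psi_local j (x (left_nb j)) (x (right_nb j)) y = c j"
  proof
    fix j assume j: "j \<in> {-N..N}"
    let ?p = "x (left_nb j)" and ?q = "x (right_nb j)"
    have nb: "rL \<le> ?p" "?p \<le> rU" "rL \<le> ?q" "?q \<le> rU"
      using nb_in_range[of j] in_closed_OmegaD[OF x] j by auto
    have "isCont (psi_local j ?p ?q) y" if "rL \<le> y" for y
      unfolding psi_local_def using rL_pos nb that
      by (auto intro!: continuous_intros isCont_o2[OF _ eta_cont])
    then show "\<exists>y. rL \<le> y \<and> y \<le> rU \<and> psi_local j ?p ?q y = c j"
      using c_between[of j ?p ?q] nb j rL_less_rU by (intro IVT) auto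
  qed
  then obtain y where "\<forall>j\<in>{-N..N}. rL \<le> y j \<and> y j \<le> rU \<and> psi_local j (x (left_nb j)) (x (right_nb j)) (y j) = c j"
    by metis
  then show ?thesis
    unfolding in_closed_Omega_def jacobi_step_def by blast
qed

lemma jacobi_step_contracts:
  assumes "in_closed_Omega x" "in_closed_Omega x'" "in_closed_Omega y" "in_closed_Omega y'"
    and "jacobi_step c x y" "jacobi_step c x' y'"
  shows "sup_dist N y y' \<le> 5 * a / (2 * (m - 5 * a)) * sup_dist N x x'"
proof (rule sup_dist_le[OF N_nonneg])
  fix j assume j: "j \<in> {-N..N}"
  have "(m - 5 * a) * \<bar>y j - y' j\<bar> \<le> 5 / 2 * a * sup_dist N x x'"
    using j nb_in_range[of j] assms(1-4)[THEN in_closed_OmegaD] assms(5,6)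
      sup_dist_ge[of "left_nb j" N x x'] sup_dist_ge[of "right_nb j" N x x']
    by (intro psi_local_root_lipschitz[of j "x (left_nb j)" "x (right_nb j)" "x' (left_nb j)" "x' (right_nb j)"])
      (auto simp: jacobi_step_def)
  then show "\<bar>y j - y' j\<bar> \<le> 5 * a / (2 * (m - 5 * a)) * sup_dist N x x'"
    using a_pos a_small by (simp add: field_simps)
qed

lemma psiE_solvable: "\<exists>x. in_Omega rL rU N x \<and> (\<forall>j\<in>{-N..N}. psiE eta N K x j = c j)"
proof -
  interpret sup_contraction N in_closed_Omega "jacobi_step c" "5 * a / (2 * (m - 5 * a))"
    using N_nonneg a_pos a_small jacobi_step_exists jacobi_step_contracts in_closed_Omega_limit
    by unfold_locales (auto simp: field_simps jacobi_step_def)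
  obtain x where x: "in_closed_Omega x" "jacobi_step c x x"
    using fixed_point_exists[of "\<lambda>_. rL"] rL_less_rU by (auto simp: in_closed_Omega_def)
  have "rL < x j \<and> x j < rU \<and> psiE eta N K x j = c j" if j: "j \<in> {-N..N}" for j
  proof -
    let ?p = "x (left_nb j)" and ?q = "x (right_nb j)"
    have psi: "psi_local j ?p ?q (x j) = c j"
      using x(2) j by (simp add: jacobi_step_def)
    moreover have "psi_local j ?p ?q rL < c j" "c j < psi_local j ?p ?q rU"
      using c_between[of j ?p ?q] j nb_in_range[of j] in_closed_OmegaD[OF x(1)] by auto
    ultimately have "x j \<noteq> rL" "x j \<noteq> rU"
      by auto
    moreover have "psiE eta N K x j = c j"
      using psiE_eq_psi_local[of j x] psi j by simp
    ultimately show ?thesis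
      using in_closed_OmegaD[OF x(1), of j] j by (simp add: less_le)
  qed
  then show ?thesis
    unfolding in_Omega_def by blast
qed

end

text \<open>The simplifier writes indices such as (1 - K) - 2 as -1 - K, the definitions as -K - 1.\<close>

lemma minus_one_minus_K: "- 1 - K = - K - 1"
  by simp

definition left_jump :: "(int \<Rightarrow> real) \<Rightarrow> real" where
  "left_jump r = eta_hat eta (r (-K)) - eta (r (-K)) - eta (r (-K - 1) + r (-K)) - eta (r (-K) + r (-K + 1))"

definition right_jump :: "(int \<Rightarrow> real) \<Rightarrow> real" where
  "right_jump r = eta (r K) + eta (r (K - 1) + r K) + eta (r K + r (K + 1)) - eta_hat eta (r K)"

definition qcf_stress :: "(int \<Rightarrow> real) \<Rightarrow> int \<Rightarrow> real" where
  "qcf_stress r j =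
    (if j < -N then 0
     else if j \<le> -K then eta_hat eta (r j)
     else if j \<le> K then left_jump r + eta (r j) + eta (r (j - 1) + r j) + eta (r j + r (j + 1))
     else if j \<le> N then left_jump r + right_jump r + eta_hat eta (r j)
     else left_jump r + right_jump r)"

lemma FQCF_eq_qcf_stress_diff:
  assumes "-N \<le> j" "j \<le> N + 1"
  shows "FQCF eta N K r j = qcf_stress r j - qcf_stress r (j - 1)"
proof -
  consider "j = -N" | "-N + 1 \<le> j \<and> j \<le> -K" | "j = 1 - K" | "2 - K \<le> j \<and> j \<le> K" | "j = K + 1"
    | "K + 2 \<le> j \<and> j \<le> N" | "j = N + 1"
    using assms by linarith
  then show ?thesis
    using K_ge_2 K_less
    by (cases; (hypsubst)?; simp add: FQCF_def qcf_stress_def left_jump_def right_jump_def algebra_simps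
        minus_one_minus_K)
qed

lemma sum_FQCF:
  assumes "-N - 1 \<le> j" "j \<le> N + 1"
  shows "(\<Sum>i=-N..j. FQCF eta N K r i) = qcf_stress r j"
proof -
  have "(\<Sum>i=-N..j. FQCF eta N K r i) = (\<Sum>i=-N..j. qcf_stress r i - qcf_stress r (i - 1))"
    using assms by (intro sum.cong) (auto simp: FQCF_eq_qcf_stress_diff)
  also have "\<dots> = qcf_stress r j - qcf_stress r (-N - 1)"
    using assms sum_int_telescope[of "-N" j "qcf_stress r"] by simp
  finally show ?thesis
    by (simp add: qcf_stress_def)
qed

lemma psiE_boundary: "psiE eta N K r (-N - 1) = 0" "psiE eta N K r (N + 1) = 0"
  by (simp_all add: psiE_def)

lemma sum_FQCE: "-N - 1 \<le> j \<Longrightarrow> (\<Sum>i=-N..j. FQCE eta N K r i) = psiE eta N K r j"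
  using sum_int_telescope[of "-N" j "psiE eta N K r"] by (simp add: FQCE_def psiE_boundary)

lemma symmetric_vecD: "symmetric_vec N r \<Longrightarrow> 1 \<le> j \<Longrightarrow> j \<le> N \<Longrightarrow> r (-j) = r j"
  unfolding symmetric_vec_def by auto

lemma interface_symmetric:
  assumes "symmetric_vec N r"
  shows "r (-K) = r K" "r (-K - 1) = r (K + 1)" "r (1 - K) = r (K - 1)"
  using symmetric_vecD[OF assms, of K] symmetric_vecD[OF assms, of "K + 1"] symmetric_vecD[OF assms, of "K - 1"]
    K_ge_2 K_less by (simp_all add: add.commute minus_one_minus_K)

lemma jumps_cancel: "symmetric_vec N r \<Longrightarrow> left_jump r + right_jump r = 0"
  using interface_symmetric[of r] by (simp add: left_jump_def right_jump_def add.commute)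

definition ghost_coeffL :: "int \<Rightarrow> real" where
  "ghost_coeffL j = (if \<bar>j\<bar> \<ge> K + 2 then 0 else if \<bar>j\<bar> = K \<or> \<bar>j\<bar> = K + 1 then 1/2 else 1)"

definition ghost_coeffR :: "int \<Rightarrow> real" where
  "ghost_coeffR j = (if \<bar>j\<bar> \<ge> K + 1 then 0 else if \<bar>j\<bar> = K \<or> \<bar>j\<bar> = K - 1 then 1/2 else 1)"

definition ghost_coeff2 :: "int \<Rightarrow> real" where
  "ghost_coeff2 j = (if \<bar>j\<bar> \<ge> K + 1 then 0 else if \<bar>j\<bar> = K then 1 else 2)"

text \<open>For symmetric r this is qcf_stress r - psiE r (qcf_stress_minus_psiE); by symmetry only the
  bonds at the left interface occur.\<close>

definition ghost_stress :: "(int \<Rightarrow> real) \<Rightarrow> int \<Rightarrow> real" where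
  "ghost_stress r j = ghost_coeff2 j * eta (2 * r (-K)) - ghost_coeffL j * eta (r (-K - 1) + r (-K))
     - ghost_coeffR j * eta (r (-K) + r (-K + 1))"

lemma ghost_coeff_bounds:
  assumes "-N \<le> j" "j \<le> N"
  shows "0 \<le> ghost_coeffL j" "0 \<le> ghost_coeffR j" "0 \<le> ghost_coeff2 j"
    "ghost_coeffL j + ghost_coeffR j \<le> 2" "ghost_coeffL j + ghost_coeffR j + ghost_coeff2 j \<le> 4"
    "coeff2 j + coeffL j + coeffR j + ghost_coeff2 j = 2 + ghost_coeffL j + ghost_coeffR j"
  using K_ge_2 K_less assms
  by (auto simp: ghost_coeffL_def ghost_coeffR_def ghost_coeff2_def coeff2_def coeffL_def coeffR_def)

lemma qcf_stress_minus_psiE: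
  assumes r: "symmetric_vec N r" and j: "-N \<le> j" "j \<le> N"
  shows "qcf_stress r j - psiE eta N K r j = ghost_stress r j"
proof -
  consider "j \<le> -K - 2" | "j = -K - 1" | "j = -K" | "j = 1 - K" | "2 - K \<le> j \<and> j \<le> K - 2"
    | "j = K - 1" | "j = K" | "j = K + 1" | "K + 2 \<le> j"
    by linarith
  then show ?thesis
    using j K_ge_2 K_less
    by (cases; (hypsubst)?; simp add: psiE_def qcf_stress_def left_jump_def right_jump_def eta_hat_def ghost_stress_def
        ghost_coeffL_def ghost_coeffR_def ghost_coeff2_def abs_if algebra_simps minus_one_minus_K interface_symmetric[OF r])
qed

lemma gfc_step_iff_psiE:
  assumes r: "symmetric_vec N r" and balanced: "(\<Sum>i=-N..N + 1. f i) = 0"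
  shows "gfc_step eta N K f r r' \<longleftrightarrow>
    (\<forall>j\<in>{-N..N}. psiE eta N K r' j = - (\<Sum>i=-N..j. f i) - ghost_stress r j)"
proof -
  have partial: "(\<Sum>i=-N..j. FQCE eta N K r' i + FG eta N K r i + f i)
      = psiE eta N K r' j + (qcf_stress r j - psiE eta N K r j) + (\<Sum>i=-N..j. f i)"
    if "j \<in> {-N..N + 1}" for j
  proof -
    have "(\<Sum>i=-N..j. FQCE eta N K r' i + FG eta N K r i + f i) = (\<Sum>i=-N..j. FQCE eta N K r' i)
        + ((\<Sum>i=-N..j. FQCF eta N K r i) - (\<Sum>i=-N..j. FQCE eta N K r i)) + (\<Sum>i=-N..j. f i)"
      by (simp add: FG_def sum.distrib sum_subtractf)
    moreover have "-N - 1 \<le> j" "j \<le> N + 1"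
      using that by auto
    ultimately show ?thesis
      by (simp only: sum_FQCE sum_FQCF)
  qed
  have last: "psiE eta N K r' (N + 1) + (qcf_stress r (N + 1) - psiE eta N K r (N + 1))
      + (\<Sum>i=-N..N + 1. f i) = 0"
    using jumps_cancel[OF r] balanced K_ge_2 K_less by (simp add: psiE_boundary qcf_stress_def)
  have range: "{-N..N + 1} = insert (N + 1) {-N..N}"
    using N_nonneg by (auto simp: atLeastAtMostPlus1_int_conv)
  have "gfc_step eta N K f r r' \<longleftrightarrow>
      (\<forall>j\<in>{-N..N + 1}. (\<Sum>i=-N..j. FQCE eta N K r' i + FG eta N K r i + f i) = 0)"
    unfolding gfc_step_def by (rule all_zero_iff_partial_sums_zero)
  also have "\<dots> \<longleftrightarrow> (\<forall>j\<in>{-N..N}. psiE eta N K r' j + ghost_stress r j + (\<Sum>i=-N..j. f i) = 0)"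
    using partial last qcf_stress_minus_psiE[OF r] by (simp add: range)
  also have "\<dots> \<longleftrightarrow> (\<forall>j\<in>{-N..N}. psiE eta N K r' j = - (\<Sum>i=-N..j. f i) - ghost_stress r j)"
    by (rule ball_cong) auto
  finally show ?thesis .
qed

lemma psiE_reflect:
  assumes "-N \<le> j" "j \<le> N"
  shows "psiE eta N K (\<lambda>i. x (-i)) j = psiE eta N K x (-j)"
proof -
  have "left_nb (-j) = - right_nb j" "right_nb (-j) = - left_nb j"
    unfolding left_nb_def right_nb_def by auto
  moreover have "coeff2 (-j) = coeff2 j" "coeffL (-j) = coeffR j" "coeffR (-j) = coeffL j"
    unfolding coeff2_def coeffL_def coeffR_def by auto
  ultimately show ?thesis
    using psiE_eq_psi_local[OF assms, of "\<lambda>i. x (-i)"] psiE_eq_psi_local[of "-j" x] assms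
    by (simp add: psi_local_def add.commute)
qed

lemma ghost_stress_reflect: "ghost_stress r (-j) = ghost_stress r j"
  unfolding ghost_stress_def ghost_coeffL_def ghost_coeffR_def ghost_coeff2_def by simp

lemma interface_in_range: "-K - 1 \<in> {-N..N}" "-K \<in> {-N..N}" "-K + 1 \<in> {-N..N}"
  using K_ge_2 K_less by auto

lemma psi_local_plus_ghost_bounds:
  assumes r: "in_closed_Omega r" and j: "-N \<le> j" "j \<le> N"
    and nb: "rL \<le> p" "p \<le> rU" "rL \<le> q" "q \<le> rU" and y: "rL \<le> y" "y \<le> rU"
  shows "eta y + 4 * eta (2 * rU) - 2 * eta (2 * rL) \<le> psi_local j p q y + ghost_stress r j"
    and "psi_local j p q y + ghost_stress r j \<le> eta y + 4 * eta (2 * rL) - 2 * eta (2 * rU)"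
proof -
  let ?e1 = "eta (2 * rL)" and ?e2 = "eta (2 * rU)"
  have w: "c * ?e2 \<le> c * eta t \<and> c * eta t \<le> c * ?e1" if "0 \<le> c" "2 * rL \<le> t" "t \<le> 2 * rU" for c t
    using that eta_far_antimono[of t "2 * rU"] eta_far_antimono[of "2 * rL" t]
    by (auto intro: mult_left_mono)
  note cb = coeff_bounds[OF j] and gb = ghost_coeff_bounds[OF j]
  have rK: "rL \<le> r i \<and> r i \<le> rU" if "i \<in> {-N..N}" for i
    using in_closed_OmegaD[OF r] that by auto
  have "(coeff2 j + coeffL j + coeffR j + ghost_coeff2 j) * e = (2 + ghost_coeffL j + ghost_coeffR j) * e" for e
    using gb(6) by simp
  then have id: "coeff2 j * e + coeffL j * e + coeffR j * e + ghost_coeff2 j * e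
      = 2 * e + ghost_coeffL j * e + ghost_coeffR j * e" for e
    by (simp add: algebra_simps)
  have "(ghost_coeffL j + ghost_coeffR j) * (?e1 - ?e2) \<le> 2 * (?e1 - ?e2)"
    using gb(4) eta_far_antimono[of "2 * rL" "2 * rU"] rL_less_rU
    by (intro mult_right_mono) auto
  then have G: "ghost_coeffL j * ?e1 + ghost_coeffR j * ?e1 - ghost_coeffL j * ?e2 - ghost_coeffR j * ?e2
      \<le> 2 * ?e1 - 2 * ?e2"
    by (simp add: algebra_simps)
  have "2 * rL \<le> 2 * y" "2 * y \<le> 2 * rU" "2 * rL \<le> y + p" "y + p \<le> 2 * rU"
    "2 * rL \<le> y + q" "y + q \<le> 2 * rU" "2 * rL \<le> 2 * r (-K)" "2 * r (-K) \<le> 2 * rU"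
    "2 * rL \<le> r (-K - 1) + r (-K)" "r (-K - 1) + r (-K) \<le> 2 * rU"
    "2 * rL \<le> r (-K) + r (-K + 1)" "r (-K) + r (-K + 1) \<le> 2 * rU"
    using nb y rK[OF interface_in_range(1)] rK[OF interface_in_range(2)] rK[OF interface_in_range(3)]
    by auto
  note bounds = w[OF cb(1) this(1,2)] w[OF cb(2) this(3,4)] w[OF cb(3) this(5,6)]
    w[OF gb(3) this(7,8)] w[OF gb(1) this(9,10)] w[OF gb(2) this(11,12)]
  show "eta y + 4 * ?e2 - 2 * ?e1 \<le> psi_local j p q y + ghost_stress r j"
    unfolding psi_local_def ghost_stress_def using bounds id[of ?e2] G by linarith
  show "psi_local j p q y + ghost_stress r j \<le> eta y + 4 * ?e1 - 2 * ?e2"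
    unfolding psi_local_def ghost_stress_def using bounds id[of ?e1] G by linarith
qed

lemma ghost_stress_lipschitz:
  assumes r: "in_closed_Omega r" "in_closed_Omega s" and j: "-N \<le> j" "j \<le> N"
  shows "\<bar>ghost_stress r j - ghost_stress s j\<bar> \<le> 8 * a * sup_dist N r s"
proof -
  let ?S = "sup_dist N r s"
  have far: "\<bar>eta (r i + r i') - eta (s i + s i')\<bar> \<le> 2 * a * ?S"
    if "i \<in> {-N..N}" "i' \<in> {-N..N}" for i i'
  proof -
    have "\<bar>eta (r i + r i') - eta (s i + s i')\<bar> \<le> a * \<bar>(r i + r i') - (s i + s i')\<bar>"
      using that in_closed_OmegaD[OF r(1), of i] in_closed_OmegaD[OF r(1), of i']
        in_closed_OmegaD[OF r(2), of i] in_closed_OmegaD[OF r(2), of i']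
      by (intro eta_far_lipschitz) auto
    also have "\<dots> \<le> a * (2 * ?S)"
      using sup_dist_ge[OF that(1), of r s] sup_dist_ge[OF that(2), of r s] a_pos
      by (intro mult_left_mono) auto
    finally show ?thesis by simp
  qed
  note c = ghost_coeff_bounds[OF j]
  let ?A = "eta (2 * r (-K)) - eta (2 * s (-K))"
    and ?B = "eta (r (-K - 1) + r (-K)) - eta (s (-K - 1) + s (-K))"
    and ?C = "eta (r (-K) + r (-K + 1)) - eta (s (-K) + s (-K + 1))"
  have A: "\<bar>?A\<bar> \<le> 2 * a * ?S"
    unfolding mult_2[of "r (-K)"] mult_2[of "s (-K)"] by (rule far) (use interface_in_range in auto)
  have B: "\<bar>?B\<bar> \<le> 2 * a * ?S" and C: "\<bar>?C\<bar> \<le> 2 * a * ?S"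
    by (rule far; use interface_in_range in auto)+
  have "\<bar>ghost_stress r j - ghost_stress s j\<bar>
      \<le> \<bar>ghost_coeff2 j * ?A\<bar> + \<bar>ghost_coeffL j * ?B\<bar> + \<bar>ghost_coeffR j * ?C\<bar>"
    unfolding ghost_stress_def by (simp add: algebra_simps)
  also have "\<dots> \<le> (ghost_coeff2 j + ghost_coeffL j + ghost_coeffR j) * (2 * a * ?S)"
    using A B C c(1-3) by (simp add: abs_mult distrib_right add_mono mult_left_mono)
  also have "\<dots> \<le> 4 * (2 * a * ?S)"
    using c(5) a_pos sup_dist_nonneg[OF N_nonneg, of r s] by (intro mult_right_mono) auto
  finally show ?thesis by simp
qed

lemma gfc_step_contracts:
  assumes "symmetric_vec N r" "in_closed_Omega r" "symmetric_vec N s" "in_closed_Omega s"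
    and "in_closed_Omega r'" "in_closed_Omega s'"
    and balanced: "(\<Sum>i=-N..N + 1. f i) = 0"
    and "gfc_step eta N K f r r'" "gfc_step eta N K f s s'"
  shows "(m - 5 * a) * sup_dist N r' s' \<le> 8 * a * sup_dist N r s"
proof (rule sup_dist_le_if_psiE_close[OF assms(5,6)])
  fix j assume j: "j \<in> {-N..N}"
  have "psiE eta N K r' j - psiE eta N K s' j = ghost_stress s j - ghost_stress r j"
    using assms(8,9) gfc_step_iff_psiE[OF assms(1) balanced] gfc_step_iff_psiE[OF assms(3) balanced] j
    by simp
  then show "\<bar>psiE eta N K r' j - psiE eta N K s' j\<bar> \<le> 8 * a * sup_dist N r s"
    using ghost_stress_lipschitz[OF assms(2,4)] j by (simp add: abs_minus_commute)
qed

end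

section \<open>The ghost-force correction iteration\<close>

lemma gfc_step_self_iff_qcf_eq: "gfc_step eta N K f r r \<longleftrightarrow> qcf_eq eta N K f r"
  unfolding gfc_step_def qcf_eq_def FG_def by simp

lemma symmetric_vec_limit:
  assumes "\<forall>n. symmetric_vec N (X n)" and "\<forall>j\<in>{-N..N}. (\<lambda>n. X n j) \<longlonglongrightarrow> x j"
  shows "symmetric_vec N x"
  unfolding symmetric_vec_def
proof
  fix j assume j: "j \<in> {1..N}"
  then have "(\<lambda>n. X n j) \<longlonglongrightarrow> x (-j)"
    using assms(1) assms(2)[rule_format, of "-j"] by (simp add: symmetric_vec_def)
  moreover have "(\<lambda>n. X n j) \<longlonglongrightarrow> x j"
    using assms(2) j by auto
  ultimately show "x (-j) = x j"
    by (rule LIMSEQ_unique)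
qed

locale qc_loaded = qc_chain +
  fixes f :: "int \<Rightarrow> real"
  assumes f_anti: "\<And>j. 0 \<le> j \<Longrightarrow> j \<le> N \<Longrightarrow> f (j + 1) = - f (-j)"
    and Phi_bounds: "\<And>j. -N \<le> j \<Longrightarrow> j \<le> N \<Longrightarrow>
        eta rL + 4 * eta (2 * rL) - 2 * eta (2 * rU) < - (\<Sum>i=-N..j. f i) \<and>
        - (\<Sum>i=-N..j. f i) < eta rU + 4 * eta (2 * rU) - 2 * eta (2 * rL)"
begin

lemma f_balanced: "(\<Sum>i=-N..N + 1. f i) = 0"
  using forces_balanced[where f = f and N = N, OF f_anti] .

lemma gfc_step_exists:
  assumes r: "symmetric_vec N r" "in_closed_Omega r"
  shows "\<exists>r'. symmetric_vec N r' \<and> in_Omega rL rU N r' \<and> gfc_step eta N K f r r'"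
proof -
  define c where "c j = - (\<Sum>i=-N..j. f i) - ghost_stress r j" for j
  have "\<exists>x. in_Omega rL rU N x \<and> (\<forall>j\<in>{-N..N}. psiE eta N K x j = c j)"
  proof (rule psiE_solvable)
    fix j p q assume jpq: "-N \<le> j" "j \<le> N" "rL \<le> p" "p \<le> rU" "rL \<le> q" "q \<le> rU"
    show "psi_local j p q rL < c j \<and> c j < psi_local j p q rU"
      using psi_local_plus_ghost_bounds(2)[OF r(2) jpq, of rL] psi_local_plus_ghost_bounds(1)[OF r(2) jpq, of rU]
        Phi_bounds[OF jpq(1,2)] rL_less_rU
      unfolding c_def by auto
  qed
  then obtain x where x: "in_Omega rL rU N x" "\<And>j. j \<in> {-N..N} \<Longrightarrow> psiE eta N K x j = c j"
    by blast
  have "x (-j) = x j" if "j \<in> {-N..N}" for j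
  proof (rule psiE_inj_on_closed_Omega)
    show "in_closed_Omega (\<lambda>i. x (-i))" "in_closed_Omega x"
      using in_closed_Omega_if_in_Omega[OF x(1)] by (auto simp: in_closed_Omega_def)
    fix i assume i: "i \<in> {-N..N}"
    then show "psiE eta N K (\<lambda>i. x (-i)) i = psiE eta N K x i"
      using psiE_reflect[of i x] x(2)[of i] x(2)[of "-i"] partial_force_sum_reflect[where f = f and N = N and j = i, OF f_anti]
      by (simp add: c_def ghost_stress_reflect)
  qed (use that in simp)
  then have "symmetric_vec N x"
    unfolding symmetric_vec_def by simp
  moreover have "gfc_step eta N K f r x"
    using gfc_step_iff_psiE[OF r(1) f_balanced] x(2) by (simp add: c_def)
  ultimately show ?thesis
    using x(1) by blast
qed

end

sublocale qc_loaded \<subseteq> gfc: sup_contraction N "\<lambda>r. symmetric_vec N r \<and> in_closed_Omega r"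
    "gfc_step eta N K f" "8 * a / (m - 5 * a)"
proof
  show "0 \<le> N" by (rule N_nonneg)
  show "0 \<le> 8 * a / (m - 5 * a)" "8 * a / (m - 5 * a) < 1"
    using a_pos a_small by auto
next
  fix r assume "symmetric_vec N r \<and> in_closed_Omega r"
  then show "\<exists>r'. (symmetric_vec N r' \<and> in_closed_Omega r') \<and> gfc_step eta N K f r r'"
    using gfc_step_exists in_closed_Omega_if_in_Omega by blast
next
  fix r s r' s'
  assume "symmetric_vec N r \<and> in_closed_Omega r" "symmetric_vec N s \<and> in_closed_Omega s"
    "symmetric_vec N r' \<and> in_closed_Omega r'" "symmetric_vec N s' \<and> in_closed_Omega s'"
    "gfc_step eta N K f r r'" "gfc_step eta N K f s s'"
  then have "(m - 5 * a) * sup_dist N r' s' \<le> 8 * a * sup_dist N r s"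
    using gfc_step_contracts f_balanced by blast
  then show "sup_dist N r' s' \<le> 8 * a / (m - 5 * a) * sup_dist N r s"
    using a_pos a_small by (simp add: field_simps)
next
  fix r y z assume "gfc_step eta N K f r y" "\<forall>j\<in>{-N..N}. z j = y j"
  then show "gfc_step eta N K f r z"
    using psiE_cong[of z y] by (simp add: gfc_step_def FQCE_def)
next
  fix X :: "nat \<Rightarrow> int \<Rightarrow> real" and x
  assume "\<forall>n. symmetric_vec N (X n) \<and> in_closed_Omega (X n)" "\<forall>j\<in>{-N..N}. (\<lambda>n. X n j) \<longlonglongrightarrow> x j"
  then show "symmetric_vec N x \<and> in_closed_Omega x"
    using symmetric_vec_limit in_closed_Omega_limit by blast
qed

context qc_loaded
begin

lemma next_iterate_exists_unique:
  assumes "symmetric_vec N r" "in_Omega rL rU N r"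
  shows "(\<exists>r'. symmetric_vec N r' \<and> in_Omega rL rU N r' \<and> gfc_step eta N K f r r') \<and>
    (\<forall>r' r''. symmetric_vec N r' \<and> in_Omega rL rU N r' \<and> gfc_step eta N K f r r' \<and>
              symmetric_vec N r'' \<and> in_Omega rL rU N r'' \<and> gfc_step eta N K f r r''
              \<longrightarrow> (\<forall>j\<in>{-N..N}. r' j = r'' j))"
  using assms gfc_step_exists gfc.step_unique in_closed_Omega_if_in_Omega by meson

lemma iterates_converge:
  assumes R: "\<forall>n. symmetric_vec N (R n) \<and> in_Omega rL rU N (R n)" "\<forall>n. gfc_step eta N K f (R n) (R (Suc n))"
  shows "\<exists>r. symmetric_vec N r \<and> in_Omega rL rU N r \<and> qcf_eq eta N K f r \<and>
     (\<forall>j\<in>{-N..N}. (\<lambda>n. R n j) \<longlonglongrightarrow> r j) \<and>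
     (\<forall>s. symmetric_vec N s \<and> in_Omega rL rU N s \<and> qcf_eq eta N K f s \<longrightarrow> (\<forall>j\<in>{-N..N}. s j = r j))"
proof -
  obtain r where r: "symmetric_vec N r" "in_closed_Omega r" "gfc_step eta N K f r r"
    and lim: "\<forall>j\<in>{-N..N}. (\<lambda>n. R n j) \<longlonglongrightarrow> r j"
    using gfc.orbit_converges[of R] R in_closed_Omega_if_in_Omega by blast
  obtain r' where r': "symmetric_vec N r'" "in_Omega rL rU N r'" "gfc_step eta N K f r r'"
    using gfc_step_exists[OF r(1,2)] by blast
  have "in_Omega rL rU N r"
    using gfc.step_unique[of r r r'] r r' in_closed_Omega_if_in_Omega unfolding in_Omega_def by auto
  moreover have "s j = r j"
    if "symmetric_vec N s \<and> in_Omega rL rU N s \<and> qcf_eq eta N K f s" "j \<in> {-N..N}" for s j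
    using gfc.fixed_point_unique[of s r j] that r in_closed_Omega_if_in_Omega gfc_step_self_iff_qcf_eq by blast
  ultimately show ?thesis
    using r lim gfc_step_self_iff_qcf_eq by blast
qed

lemma iterate_contraction:
  assumes "symmetric_vec N r" "in_Omega rL rU N r" "symmetric_vec N s" "in_Omega rL rU N s"
    "symmetric_vec N r'" "in_Omega rL rU N r'" "gfc_step eta N K f r r'"
    "symmetric_vec N s'" "in_Omega rL rU N s'" "gfc_step eta N K f s s'"
  shows "sup_dist N r' s' \<le> 8 * a / (m - 5 * a) * sup_dist N r s"
  using assms by (intro gfc.step_contracts) (auto dest: in_closed_Omega_if_in_Omega)

end

lemma qc_chainI_from_derivatives:
  fixes eta eta1 eta2 :: "real \<Rightarrow> real"
  assumes eta_deriv: "\<And>x. x > 0 \<Longrightarrow> (eta has_real_derivative eta1 x) (at x)"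
    and eta1_deriv: "\<And>x. x > 0 \<Longrightarrow> (eta1 has_real_derivative eta2 x) (at x)"
    and rt: "0 < rt1" "rt1 < rt2"
    and eta1_neg: "\<And>r. r > rt1 \<Longrightarrow> eta1 r < 0"
    and eta2_neg: "\<And>r. 0 < r \<Longrightarrow> r < rt2 \<Longrightarrow> eta2 r < 0"
    and eta2_pos: "\<And>r. r > rt2 \<Longrightarrow> eta2 r > 0"
    and rL: "rt2 / 2 < rL" "rL < rU" and eta1_cond: "eta1 rU + 13 * eta1 (2 * rL) > 0"
    and K: "2 \<le> K" "K < N - 1"
  shows "qc_chain eta rL rU (eta1 rU) (- eta1 (2 * rL)) N K"
proof -
  have rL_pos: "0 < rL"
    using rt rL by simp
  have far_neg: "eta1 (2 * rL) < 0"
    using eta1_neg rt rL by simp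
  have "rU \<le> rt1"
    using eta1_neg[of rU] eta1_cond far_neg by force
  have near_slope: "eta1 rU \<le> eta1 x" if "rL \<le> x" "x \<le> rU" for x
  proof (rule DERIV_nonpos_imp_nonincreasing[OF that(2)])
    fix z assume "x \<le> z" "z \<le> rU"
    then show "\<exists>y. (eta1 has_real_derivative y) (at z) \<and> y \<le> 0"
      using that rL_pos \<open>rU \<le> rt1\<close> rt eta1_deriv eta2_neg[of z] by (intro exI[of _ "eta2 z"]) auto
  qed
  have far_slope: "eta1 (2 * rL) \<le> eta1 x" if "2 * rL \<le> x" for x
  proof (rule DERIV_nonneg_imp_nondecreasing[OF that])
    fix z assume "2 * rL \<le> z" "z \<le> x"
    then show "\<exists>y. (eta1 has_real_derivative y) (at z) \<and> 0 \<le> y"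
      using rL rt eta1_deriv eta2_pos[of z] by (intro exI[of _ "eta2 z"]) auto
  qed
  show ?thesis
  proof
    fix y y' assume "rL \<le> y" "y \<le> y'" "y' \<le> rU"
    then show "eta1 rU * (y' - y) \<le> eta y' - eta y"
      using rL_pos by (intro increment_ge_if_deriv_ge[where f' = eta1] eta_deriv near_slope) auto
  next
    fix s t assume st: "2 * rL \<le> s" "s \<le> t" "t \<le> 2 * rU"
    have "eta1 (2 * rL) * (t - s) \<le> eta t - eta s"
      using st rL_pos by (intro increment_ge_if_deriv_ge[where f' = eta1] eta_deriv far_slope) auto
    moreover have "eta t - eta s \<le> 0 * (t - s)"
      using st rL_pos rL rt
      by (intro increment_le_if_deriv_le[where f' = eta1] eta_deriv less_imp_le[OF eta1_neg]) auto
    ultimately show "- (- eta1 (2 * rL) * (t - s)) \<le> eta t - eta s \<and> eta t - eta s \<le> 0"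
      by simp
  next
    fix x :: real assume "0 < x"
    then show "isCont eta x"
      by (rule DERIV_isCont[OF eta_deriv])
  qed (use K rL_pos rL far_neg eta1_cond in auto)
qed

theorem corollary5p2:
  fixes phi eta eta1 eta2 :: "real \<Rightarrow> real"
    and a0 a1 rt1 rt2 rL rU :: real
    and N K :: int
    and f :: "int \<Rightarrow> real"
  assumes phi_deriv: "\<And>x. x > 0 \<Longrightarrow> (phi has_real_derivative eta x) (at x)"
    and eta_deriv: "\<And>x. x > 0 \<Longrightarrow> (eta has_real_derivative eta1 x) (at x)"
    and eta1_deriv: "\<And>x. x > 0 \<Longrightarrow> (eta1 has_real_derivative eta2 x) (at x)"
    and eta2_cont: "continuous_on {0<..} eta2"
    and cst: "0 < a0" "a0 < rt1" "rt1 < rt2" "rt2 < 2 * a0" "a1 > a0"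
    and eta1_pos: "\<And>r. 0 < r \<Longrightarrow> r < rt1 \<Longrightarrow> eta1 r > 0"
    and eta1_neg: "\<And>r. r > rt1 \<Longrightarrow> eta1 r < 0"
    and eta2_neg: "\<And>r. 0 < r \<Longrightarrow> r < rt2 \<Longrightarrow> eta2 r < 0"
    and eta2_pos: "\<And>r. r > rt2 \<Longrightarrow> eta2 r > 0"
    and hat_neg: "\<And>r. 0 < r \<Longrightarrow> r < a0 \<Longrightarrow> eta_hat eta r < 0"
    and hat_pos: "\<And>r. r > a0 \<Longrightarrow> eta_hat eta r > 0"
    and hatd_pos: "\<And>r. 0 < r \<Longrightarrow> r < a1 \<Longrightarrow> eta1 r + 4 * eta1 (2 * r) > 0"
    and hatd_neg: "\<And>r. r > a1 \<Longrightarrow> eta1 r + 4 * eta1 (2 * r) < 0"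
    and K_ge: "K \<ge> 2" and K_lt: "K < N - 1"
    and f_anti: "\<And>j. 0 \<le> j \<Longrightarrow> j \<le> N \<Longrightarrow> f (j + 1) = - f (-j)"
    and rL_gt: "rt2 / 2 < rL" and rL_rU: "rL < rU"
    and eta1_cond: "eta1 rU + 13 * eta1 (2 * rL) > 0"
    and Phi_bounds: "\<And>j. -N \<le> j \<Longrightarrow> j \<le> N \<Longrightarrow>
        eta rL + 4 * eta (2 * rL) - 2 * eta (2 * rU) < - (\<Sum>i=-N..j. f i) \<and>
        - (\<Sum>i=-N..j. f i) < eta rU + 4 * eta (2 * rU) - 2 * eta (2 * rL)"
  shows
    "(\<forall>r. symmetric_vec N r \<and> in_Omega rL rU N r \<longrightarrow>
        (\<exists>r'. symmetric_vec N r' \<and> in_Omega rL rU N r' \<and> gfc_step eta N K f r r') \<and>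
        (\<forall>r' r''. symmetric_vec N r' \<and> in_Omega rL rU N r' \<and> gfc_step eta N K f r r' \<and>
                  symmetric_vec N r'' \<and> in_Omega rL rU N r'' \<and> gfc_step eta N K f r r''
                  \<longrightarrow> (\<forall>j\<in>{-N..N}. r' j = r'' j)))
     \<and> 8 * \<bar>eta1 (2 * rL)\<bar> / (eta1 rU - 5 * \<bar>eta1 (2 * rL)\<bar>) < 1
     \<and> (\<forall>r s r' s'. symmetric_vec N r \<and> in_Omega rL rU N r \<and>
                    symmetric_vec N s \<and> in_Omega rL rU N s \<and>
                    symmetric_vec N r' \<and> in_Omega rL rU N r' \<and> gfc_step eta N K f r r' \<and>
                    symmetric_vec N s' \<and> in_Omega rL rU N s' \<and> gfc_step eta N K f s s' \<longrightarrow>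
          sup_dist N r' s' \<le>
            8 * \<bar>eta1 (2 * rL)\<bar> / (eta1 rU - 5 * \<bar>eta1 (2 * rL)\<bar>) * sup_dist N r s)
     \<and> (\<forall>R :: nat \<Rightarrow> int \<Rightarrow> real.
          (\<forall>n. symmetric_vec N (R n) \<and> in_Omega rL rU N (R n)) \<and>
          (\<forall>n. gfc_step eta N K f (R n) (R (Suc n))) \<longrightarrow>
          (\<exists>r. symmetric_vec N r \<and> in_Omega rL rU N r \<and> qcf_eq eta N K f r \<and>
               (\<forall>j\<in>{-N..N}. (\<lambda>n. R n j) \<longlonglongrightarrow> r j) \<and>
               (\<forall>s. symmetric_vec N s \<and> in_Omega rL rU N s \<and> qcf_eq eta N K f s
                    \<longrightarrow> (\<forall>j\<in>{-N..N}. s j = r j))))"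
proof -
  interpret qc_loaded eta rL rU "eta1 rU" "- eta1 (2 * rL)" N K f
  proof (rule qc_loaded.intro)
    show "qc_chain eta rL rU (eta1 rU) (- eta1 (2 * rL)) N K"
      using cst by (intro qc_chainI_from_derivatives[OF eta_deriv eta1_deriv _ _ eta1_neg eta2_neg eta2_pos
          rL_gt rL_rU eta1_cond K_ge K_lt]) auto
    show "qc_loaded_axioms eta rL rU N f"
      using f_anti Phi_bounds by unfold_locales
  qed
  have "\<bar>eta1 (2 * rL)\<bar> = - eta1 (2 * rL)"
    using a_pos by simp
  then show ?thesis
    using next_iterate_exists_unique gfc.q_less_1 iterate_contraction iterates_converge by auto
qed
end
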